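(* Let $N\ge2$, $p>1$, and let $Q:\mathbb{R}^N\to\mathbb{R}$ be a nonnegative Hölder continuous function with $Q(0)>0$. Suppose $u\in C^2(\mathbb{R}^N\setminus\{0\})$ is a real-valued classical solution of $$-\Delta u-u=Q|u|^{p-1}u\quad\text{in }\mathbb{R}^N\setminus\{0\},\qquad \lim_{|x|\to0^+}u(x)=+\infty .$$ Then $u\in L^1_{loc}(\mathbb{R}^N)$ and $Q|u|^{p-1}u\in L^1_{loc}(\mathbb{R}^N)$. *)

theory Defs
  imports "HOL-Analysis.Analysis"
begin

definition partial_deriv :: "'n::finite \<Rightarrow> (real^'n \<Rightarrow> real) \<Rightarrow> real^'n \<Rightarrow> real" where
  "partial_deriv i f x = deriv (\<lambda>t. f (x + t *\<^sub>R axis i 1)) 0"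

definition has_partials_on :: "(real^'n::finite) set \<Rightarrow> (real^'n \<Rightarrow> real) \<Rightarrow> bool" where
  "has_partials_on S f \<longleftrightarrow>
     (\<forall>i. \<forall>x\<in>S. (\<lambda>t. f (x + t *\<^sub>R axis i 1)) differentiable (at 0))"

definition C2_on :: "(real^'n::finite) set \<Rightarrow> (real^'n \<Rightarrow> real) \<Rightarrow> bool" where
  "C2_on S f \<longleftrightarrow>
     continuous_on S f \<and> has_partials_on S f \<and>
     (\<forall>i. continuous_on S (partial_deriv i f) \<and> has_partials_on S (partial_deriv i f)) \<and>
     (\<forall>i j. continuous_on S (partial_deriv j (partial_deriv i f)))"

definition laplacian :: "(real^'n::finite \<Rightarrow> real) \<Rightarrow> real^'n \<Rightarrow> real" where
  "laplacian f x = (\<Sum>i\<in>UNIV. partial_deriv i (partial_deriv i f) x)"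

definition hoelder_continuous :: "('a::metric_space \<Rightarrow> real) \<Rightarrow> bool" where
  "hoelder_continuous Q \<longleftrightarrow>
     (\<exists>\<alpha> C. 0 < \<alpha> \<and> \<alpha> \<le> 1 \<and> (\<forall>x y. \<bar>Q x - Q y\<bar> \<le> C * dist x y powr \<alpha>))"

definition locally_L1 :: "(real^'n::finite \<Rightarrow> real) \<Rightarrow> bool" where
  "locally_L1 f \<longleftrightarrow> (\<forall>K. compact K \<longrightarrow> f absolutely_integrable_on K)"

end

theory Submission
  imports Defs
begin

text \<open>
  Near the origin u \<ge> 1, hence f = -\<Delta>u = u + Q |u|^(p-1) u \<ge> u \<ge> 0 there. Since u and
  Q |u|^(p-1) u both lie between 0 and f near the origin and are continuous elsewhere, it suffices
  to show that f is integrable near the origin.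

  Test the equation with \<psi> G_k(u), where \<psi> is a radial cutoff, 1 on the ball of radius r
  and 0 outside the ball of radius \<rho>, and G_k is a C^1 truncation, 1 below k and 0 above k + 1.
  Because u tends to \<infinity> at 0, the field \<psi> G_k(u) \<nabla>u vanishes near the singularity, so its
  divergence integrates to 0, and expanding the divergence gives
    \<integral> \<psi> G_k(u) f = \<integral> G_k(u) \<nabla>\<psi>\<cdot>\<nabla>u + \<integral> \<psi> G_k'(u) |\<nabla>u|^2 \<le> \<integral> \<Sum>_i |\<partial>_i\<psi> \<partial>_iu|.
  The right-hand side does not depend on k, as \<nabla>\<psi> vanishes outside the annulus r \<le> |x| \<le> \<rho>,
  so monotone convergence for k \<rightarrow> \<infinity> shows that \<psi> f is integrable.
\<close>

section \<open>Smooth cutoff functions\<close>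

lemma has_real_derivative_glue:
  fixes f g h :: "real \<Rightarrow> real"
  assumes f: "(f has_real_derivative D) (at x)" and g: "(g has_real_derivative D) (at x)"
    and "\<forall>\<^sub>F y in at_left x. h y = f y" and "\<forall>\<^sub>F y in at_right x. h y = g y"
    and "h x = f x" and "h x = g x"
  shows "(h has_real_derivative D) (at x)"
proof -
  have evl: "\<forall>\<^sub>F y in at_left x. (f y - f x) / (y - x) = (h y - h x) / (y - x)"
    and evr: "\<forall>\<^sub>F y in at_right x. (g y - g x) / (y - x) = (h y - h x) / (y - x)"
    using assms(3-6) by (auto elim: eventually_mono)
  have "((\<lambda>y. (f y - f x) / (y - x)) \<longlongrightarrow> D) (at_left x)"
    and "((\<lambda>y. (g y - g x) / (y - x)) \<longlongrightarrow> D) (at_right x)"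
    using f g by (auto simp: has_field_derivative_iff filterlim_at_split)
  then have "((\<lambda>y. (h y - h x) / (y - x)) \<longlongrightarrow> D) (at_left x)"
    and "((\<lambda>y. (h y - h x) / (y - x)) \<longlongrightarrow> D) (at_right x)"
    using tendsto_cong[OF evl] tendsto_cong[OF evr] by simp_all
  then show ?thesis
    by (simp add: has_field_derivative_iff filterlim_at_split)
qed

definition smoothstep :: "real \<Rightarrow> real" where
  "smoothstep s = 3 * (max 0 (min 1 s))^2 - 2 * (max 0 (min 1 s))^3"

definition smoothstep' :: "real \<Rightarrow> real" where
  "smoothstep' s = 6 * max 0 (min 1 s) - 6 * (max 0 (min 1 s))^2"

lemma smoothstep_eq_0: "s \<le> 0 \<Longrightarrow> smoothstep s = 0"
  and smoothstep_eq_1: "1 \<le> s \<Longrightarrow> smoothstep s = 1"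
  and smoothstep'_eq_0: "s \<le> 0 \<or> 1 \<le> s \<Longrightarrow> smoothstep' s = 0"
  by (auto simp: smoothstep_def smoothstep'_def)

lemma continuous_on_smoothstep [continuous_intros]:
  "continuous_on S f \<Longrightarrow> continuous_on S (\<lambda>x. smoothstep (f x))"
  unfolding smoothstep_def by (intro continuous_intros)

lemma continuous_on_smoothstep' [continuous_intros]:
  "continuous_on S f \<Longrightarrow> continuous_on S (\<lambda>x. smoothstep' (f x))"
  unfolding smoothstep'_def by (intro continuous_intros)

lemma smoothstep_has_real_derivative: "(smoothstep has_real_derivative smoothstep' s) (at s)"
proof -
  define P :: "real \<Rightarrow> real" where "P t = 3 * t^2 - 2 * t^3" for t
  have P: "(P has_real_derivative 6 * t - 6 * t^2) (at t)" for t
    unfolding P_def by (auto intro!: derivative_eq_intros simp: power2_eq_square)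
  have on_open: "(smoothstep has_real_derivative smoothstep' s) (at s)"
    if "open T" "s \<in> T" "\<And>y. y \<in> T \<Longrightarrow> smoothstep y = q y" "(q has_real_derivative smoothstep' s) (at s)"
    for T q
    by (rule has_field_derivative_transform_within_open[OF that(4) that(1,2)]) (use that(3) in auto)
  consider "s < 0" | "s = 0" | "0 < s" "s < 1" | "s = 1" | "1 < s" by linarith
  then show ?thesis
  proof cases
    case 1
    show ?thesis
      by (rule on_open[of "{..<0}" "\<lambda>_. 0"]) (use 1 in \<open>auto simp: smoothstep_def smoothstep'_def\<close>)
  next
    case 2
    have "(smoothstep has_real_derivative 0) (at 0)"
    proof (rule has_real_derivative_glue[OF DERIV_const P[of 0, simplified]])
      show "\<forall>\<^sub>F y in at_left 0. smoothstep y = 0"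
        using eventually_at_left_real[of "-1" 0] by (auto elim!: eventually_mono intro: smoothstep_eq_0)
      show "\<forall>\<^sub>F y in at_right 0. smoothstep y = P y"
        using eventually_at_right_real[of 0 1] by (auto elim!: eventually_mono simp: smoothstep_def P_def)
    qed (simp_all add: smoothstep_def P_def)
    then show ?thesis using 2 by (simp add: smoothstep'_def)
  next
    case 3
    show ?thesis
      by (rule on_open[of "{0<..<1}" P]) (use 3 P[of s] in \<open>auto simp: smoothstep_def smoothstep'_def P_def\<close>)
  next
    case 4
    have "(smoothstep has_real_derivative 0) (at 1)"
    proof (rule has_real_derivative_glue[OF P[of 1, simplified] DERIV_const])
      show "\<forall>\<^sub>F y in at_left 1. smoothstep y = P y"
        using eventually_at_left_real[of 0 1] by (auto elim!: eventually_mono simp: smoothstep_def P_def)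
      show "\<forall>\<^sub>F y in at_right 1. smoothstep y = 1"
        using eventually_at_right_real[of 1 2] by (auto elim!: eventually_mono intro: smoothstep_eq_1)
    qed (simp_all add: smoothstep_def P_def)
    then show ?thesis using 4 by (simp add: smoothstep'_def)
  next
    case 5
    show ?thesis
      by (rule on_open[of "{1<..}" "\<lambda>_. 1"]) (use 5 in \<open>auto simp: smoothstep_def smoothstep'_def\<close>)
  qed
qed

lemma smoothstep'_nonneg: "0 \<le> smoothstep' s"
proof -
  have "(max 0 (min 1 s))^2 \<le> max 0 (min 1 s)"
    by (simp add: power2_eq_square mult_left_le)
  then show ?thesis unfolding smoothstep'_def by simp
qed

lemma smoothstep_mono: "a \<le> b \<Longrightarrow> smoothstep a \<le> smoothstep b"
  using smoothstep_has_real_derivative smoothstep'_nonneg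
  by (intro DERIV_nonneg_imp_nondecreasing[of a b smoothstep]) auto

lemma smoothstep_nonneg: "0 \<le> smoothstep s"
proof -
  have "smoothstep (min s 0) \<le> smoothstep s" by (rule smoothstep_mono) simp
  moreover have "smoothstep (min s 0) = 0" by (rule smoothstep_eq_0) simp
  ultimately show ?thesis by simp
qed

lemma smoothstep_le_1: "smoothstep s \<le> 1"
proof -
  have "smoothstep s \<le> smoothstep (max s 1)" by (rule smoothstep_mono) simp
  moreover have "smoothstep (max s 1) = 1" by (rule smoothstep_eq_1) simp
  ultimately show ?thesis by simp
qed

definition cutoff :: "real \<Rightarrow> real \<Rightarrow> real \<Rightarrow> real" where
  "cutoff a b s = 1 - smoothstep ((s - a) / (b - a))"

definition cutoff' :: "real \<Rightarrow> real \<Rightarrow> real \<Rightarrow> real" where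
  "cutoff' a b s = - smoothstep' ((s - a) / (b - a)) / (b - a)"

lemma cutoff_has_real_derivative: "(cutoff a b has_real_derivative cutoff' a b s) (at s)"
proof -
  have "((\<lambda>s. (s - a) / (b - a)) has_real_derivative 1 / (b - a)) (at s)"
    using DERIV_cdivide[OF DERIV_diff[OF DERIV_ident DERIV_const]] by simp
  from DERIV_diff[OF DERIV_const DERIV_chain2[OF smoothstep_has_real_derivative this], of 1]
  show ?thesis
    unfolding cutoff_def cutoff'_def by simp
qed

lemma continuous_on_cutoff [continuous_intros]:
  "continuous_on S f \<Longrightarrow> continuous_on S (\<lambda>x. cutoff a b (f x))"
  unfolding cutoff_def divide_inverse
  by (intro continuous_intros continuous_on_mult_right[of S "\<lambda>x. f x - a"])

lemma continuous_on_cutoff' [continuous_intros]: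
  "continuous_on S f \<Longrightarrow> continuous_on S (\<lambda>x. cutoff' a b (f x))"
  unfolding cutoff'_def divide_inverse
  by (intro continuous_intros continuous_on_mult_right[of S "\<lambda>x. f x - a"])

lemma cutoff_nonneg: "0 \<le> cutoff a b s"
  and cutoff_le_1: "cutoff a b s \<le> 1"
  using smoothstep_nonneg smoothstep_le_1 by (simp_all add: cutoff_def)

lemma cutoff'_nonpos: "a \<le> b \<Longrightarrow> cutoff' a b s \<le> 0"
  using smoothstep'_nonneg by (simp add: cutoff'_def divide_nonneg_nonneg)

lemma cutoff_eq_1: "a < b \<Longrightarrow> s \<le> a \<Longrightarrow> cutoff a b s = 1"
  and cutoff_eq_0: "a < b \<Longrightarrow> b \<le> s \<Longrightarrow> cutoff a b s = 0"
  and cutoff'_eq_0: "a < b \<Longrightarrow> s \<le> a \<or> b \<le> s \<Longrightarrow> cutoff' a b s = 0"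
  by (auto simp: cutoff_def cutoff'_def smoothstep_eq_0 smoothstep_eq_1 smoothstep'_eq_0
      divide_nonpos_pos)

lemma cutoff_unit_mono: "a \<le> a' \<Longrightarrow> cutoff a (a + 1) s \<le> cutoff a' (a' + 1) s"
  using smoothstep_mono[of "s - a'" "s - a"] by (simp add: cutoff_def)

definition bump :: "real \<Rightarrow> real \<Rightarrow> 'a::real_inner \<Rightarrow> real" where
  "bump r \<rho> x = cutoff (r\<^sup>2) (\<rho>\<^sup>2) (x \<bullet> x)"

lemma continuous_on_bump: "continuous_on S (bump r \<rho>)"
  unfolding bump_def by (intro continuous_intros)

lemma bump_has_real_derivative_line:
  "((\<lambda>t. bump r \<rho> (y + t *\<^sub>R e)) has_real_derivative cutoff' (r\<^sup>2) (\<rho>\<^sup>2) (y \<bullet> y) * (2 * (y \<bullet> e))) (at 0)"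
proof -
  have "((\<lambda>t. (y + t *\<^sub>R e) \<bullet> (y + t *\<^sub>R e)) has_real_derivative 2 * (y \<bullet> e)) (at 0)"
  proof -
    have "(\<lambda>t. (y + t *\<^sub>R e) \<bullet> (y + t *\<^sub>R e)) = (\<lambda>t. y \<bullet> y + 2 * t * (y \<bullet> e) + t\<^sup>2 * (e \<bullet> e))"
      by (auto simp: fun_eq_iff inner_add_left inner_add_right inner_commute power2_eq_square algebra_simps)
    moreover have "((\<lambda>t. y \<bullet> y + 2 * t * (y \<bullet> e) + t\<^sup>2 * (e \<bullet> e)) has_real_derivative 2 * (y \<bullet> e)) (at 0)"
      by (auto intro!: derivative_eq_intros)
    ultimately show ?thesis by simp
  qed
  from DERIV_chain2[OF cutoff_has_real_derivative this] show ?thesis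
    unfolding bump_def by simp
qed

lemma partial_deriv_bump: "partial_deriv i (bump r \<rho>) x = cutoff' (r\<^sup>2) (\<rho>\<^sup>2) (x \<bullet> x) * (2 * x $ i)"
  unfolding partial_deriv_def using bump_has_real_derivative_line[of r \<rho> x "axis i 1"]
  by (simp add: DERIV_imp_deriv inner_axis)

lemma continuous_on_partial_deriv_bump: "continuous_on S (partial_deriv i (bump r \<rho>))"
  unfolding partial_deriv_bump by (intro continuous_intros)

lemma bump_has_real_derivative_axis:
  "((\<lambda>t. bump r \<rho> (y + t *\<^sub>R axis i 1)) has_real_derivative partial_deriv i (bump r \<rho>) y) (at 0)"
  using bump_has_real_derivative_line[of r \<rho> y "axis i 1"] by (simp add: partial_deriv_bump inner_axis)

lemma bump_nonneg: "0 \<le> bump r \<rho> x"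
  by (simp add: bump_def cutoff_nonneg)

lemma bump_eq_1: "0 \<le> r \<Longrightarrow> r < \<rho> \<Longrightarrow> norm x \<le> r \<Longrightarrow> bump r \<rho> x = 1"
  by (auto simp: bump_def intro!: cutoff_eq_1 power_strict_mono power_mono simp flip: power2_norm_eq_inner)

lemma bump_eq_0: "0 \<le> r \<Longrightarrow> r < \<rho> \<Longrightarrow> \<rho> \<le> norm x \<Longrightarrow> bump r \<rho> x = 0"
  by (auto simp: bump_def intro!: cutoff_eq_0 power_strict_mono power_mono simp flip: power2_norm_eq_inner)

lemma partial_deriv_bump_eq_0:
  "0 \<le> r \<Longrightarrow> r < \<rho> \<Longrightarrow> norm x \<le> r \<or> \<rho> \<le> norm x \<Longrightarrow> partial_deriv i (bump r \<rho>) x = 0"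
  by (auto simp: partial_deriv_bump intro!: cutoff'_eq_0 power_strict_mono power_mono
      simp flip: power2_norm_eq_inner)

lemma bump_cutoff_mult_nonneg_mono:
  fixes x :: "'a::real_inner" and f :: real
  assumes r: "0 < r" "r < \<rho>" and f: "norm x < \<rho> \<Longrightarrow> 0 \<le> f" and k: "k \<le> k'"
  shows "0 \<le> bump r \<rho> x * cutoff k (k + 1) s * f" (is "0 \<le> ?a * f")
    and "bump r \<rho> x * cutoff k (k + 1) s * f \<le> bump r \<rho> x * cutoff k' (k' + 1) s * f"
      (is "_ \<le> ?b * f")
proof (atomize (full), cases "norm x < \<rho>")
  case True
  have "?a \<le> ?b"
    by (intro mult_left_mono cutoff_unit_mono k bump_nonneg)
  moreover have "0 \<le> ?a"
    by (simp add: bump_nonneg cutoff_nonneg)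
  ultimately show "0 \<le> ?a * f \<and> ?a * f \<le> ?b * f"
    using f[OF True] by (simp add: mult_right_mono)
next
  case False
  then show "0 \<le> ?a * f \<and> ?a * f \<le> ?b * f"
    using r by (simp add: bump_eq_0)
qed

section \<open>Integrals of directional derivatives\<close>

lemma absolutely_integrable_continuous_compact:
  fixes f :: "'a::euclidean_space \<Rightarrow> real"
  assumes "compact S" "continuous_on S f"
  shows "f absolutely_integrable_on S"
proof -
  have "(\<lambda>x. indicator S x *\<^sub>R f x) \<in> borel_measurable lborel"
    using borel_measurable_continuous_on_indicator[OF borel_compact[OF assms(1)] assms(2)] by simp
  moreover have "integrable lborel (\<lambda>x. indicator S x *\<^sub>R f x)"
    by (rule borel_integrable_compact[OF assms])
  ultimately show ?thesis
    unfolding set_integrable_def by (simp add: integrable_completion)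
qed

lemma integrable_on_UNIV_compact_support:
  fixes h :: "'a::euclidean_space \<Rightarrow> real"
  assumes h_cont: "continuous_on UNIV h" and h_supp: "\<And>x. R \<le> norm x \<Longrightarrow> h x = 0"
  shows "h integrable_on UNIV"
proof -
  have "h absolutely_integrable_on cball 0 R"
    by (rule absolutely_integrable_continuous_compact) (auto intro: continuous_on_subset[OF h_cont])
  then have "h integrable_on cball 0 R"
    using set_lebesgue_integral_eq_integral(1) by blast
  then have "(h has_integral integral (cball 0 R) h) UNIV"
    by (rule has_integral_on_superset[OF integrable_integral]) (use h_supp in auto)
  then show ?thesis
    by blast
qed

lemma bounded_compact_support:
  fixes D :: "'a::euclidean_space \<Rightarrow> real"
  assumes D_cont: "continuous_on UNIV D" and D_supp: "\<And>x. R \<le> norm x \<Longrightarrow> D x = 0"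
  obtains M where "\<And>y. \<bar>D y\<bar> \<le> M"
proof -
  obtain M where M: "\<And>x. x \<in> cball 0 R \<Longrightarrow> norm (D x) \<le> M"
    using continuous_on_compact_bound[OF compact_cball continuous_on_subset[OF D_cont]] by blast
  have "\<bar>D y\<bar> \<le> max M 0" for y
    using D_supp[of y] M[of y] by (cases "norm y \<le> R") auto
  then show ?thesis
    using that by blast
qed

lemma has_integral_translate:
  fixes f :: "'a::euclidean_space \<Rightarrow> real"
  assumes f: "(f has_integral I) UNIV" and bdd: "bounded {x. f x \<noteq> 0}"
  shows "((\<lambda>x. f (x + c)) has_integral I) UNIV"
proof -
  obtain a where a: "{x. f x \<noteq> 0} \<subseteq> cbox (-a) a"
    using bounded_subset_cbox_symmetric[OF bdd] by blast
  have "(\<lambda>x. if x \<in> cbox (-a) a then f x else 0) = f"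
    using a by force
  with f have "(f has_integral I) (cbox (-a) a)"
    using has_integral_restrict_UNIV[of "cbox (-a) a" f I] by simp
  from has_integral_affinity[OF this, of 1 c]
  have "((\<lambda>x. f (x + c)) has_integral I) ((\<lambda>x. x - c) ` cbox (-a) a)"
    by simp
  then show ?thesis
  proof (rule has_integral_on_superset)
    show "f (x + c) = 0" if "x \<notin> (\<lambda>x. x - c) ` cbox (-a) a" for x
    proof -
      have "x + c \<notin> cbox (-a) a"
        using that by (metis add_diff_cancel image_eqI)
      then show ?thesis using a by blast
    qed
  qed simp
qed

lemma difference_quotient_has_integral_0:
  fixes h :: "'a::euclidean_space \<Rightarrow> real"
  assumes h_cont: "continuous_on UNIV h" and h_supp: "\<And>x. R \<le> norm x \<Longrightarrow> h x = 0"
    and c: "\<bar>c\<bar> \<le> 1"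
  shows "((\<lambda>x. (h (x + c *\<^sub>R e) - h x) / c) has_integral 0) (cball 0 (R + norm e))"
proof -
  have h_int: "(h has_integral integral UNIV h) UNIV"
    using integrable_on_UNIV_compact_support[OF h_cont h_supp] by (simp add: integrable_integral)
  have "{x. h x \<noteq> 0} \<subseteq> cball 0 R"
    using h_supp by (force simp: not_le)
  then have "bounded {x. h x \<noteq> 0}"
    using bounded_cball bounded_subset by blast
  then have "((\<lambda>x. h (x + c *\<^sub>R e)) has_integral integral UNIV h) UNIV"
    by (rule has_integral_translate[OF h_int])
  from has_integral_divide[OF has_integral_diff[OF this h_int], of c]
  have "((\<lambda>x. (h (x + c *\<^sub>R e) - h x) / c) has_integral 0) UNIV"
    by simp
  moreover have outside: "h (x + c *\<^sub>R e) = 0" "h x = 0" if "x \<notin> cball 0 (R + norm e)" for x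
  proof -
    have "norm x \<le> norm (x + c *\<^sub>R e) + \<bar>c\<bar> * norm e"
      using norm_triangle_ineq4[of "x + c *\<^sub>R e" "c *\<^sub>R e"] by simp
    moreover have "\<bar>c\<bar> * norm e \<le> norm e"
      using c by (simp add: mult_left_le_one_le)
    moreover have "R + norm e < norm x" "0 \<le> norm e"
      using that by auto
    ultimately have "R \<le> norm (x + c *\<^sub>R e)" "R \<le> norm x"
      by linarith+
    then show "h (x + c *\<^sub>R e) = 0" "h x = 0"
      using h_supp by blast+
  qed
  moreover have "(\<lambda>x. if x \<in> cball 0 (R + norm e) then (h (x + c *\<^sub>R e) - h x) / c else 0)
      = (\<lambda>x. (h (x + c *\<^sub>R e) - h x) / c)"
    using outside by fastforce
  ultimately show ?thesis
    using has_integral_restrict_UNIV[of "cball 0 (R + norm e)" "\<lambda>x. (h (x + c *\<^sub>R e) - h x) / c" 0]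
    by simp
qed

lemma abs_difference_quotient_le:
  fixes h D :: "'a::real_normed_vector \<Rightarrow> real"
  assumes h_deriv: "\<And>y. ((\<lambda>t. h (y + t *\<^sub>R e)) has_real_derivative D y) (at 0)"
    and M: "\<And>y. \<bar>D y\<bar> \<le> M" and c: "0 < c"
  shows "\<bar>(h (x + c *\<^sub>R e) - h x) / c\<bar> \<le> M"
proof -
  have "((\<lambda>s. h (x + s *\<^sub>R e)) has_real_derivative D (x + s *\<^sub>R e)) (at s)" for s
    using h_deriv[of "x + s *\<^sub>R e"] DERIV_shift[of "\<lambda>s. h (x + s *\<^sub>R e)" _ 0 s]
    by (simp add: algebra_simps)
  then obtain z where "h (x + c *\<^sub>R e) - h (x + 0 *\<^sub>R e) = (c - 0) * D (x + z *\<^sub>R e)"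
    using MVT2[of 0 c "\<lambda>s. h (x + s *\<^sub>R e)" "\<lambda>s. D (x + s *\<^sub>R e)"] c by auto
  then show ?thesis
    using c M[of "x + z *\<^sub>R e"] by simp
qed

lemma directional_derivative_has_integral_0:
  fixes h D :: "'a::euclidean_space \<Rightarrow> real"
  assumes h_cont: "continuous_on UNIV h" and D_cont: "continuous_on UNIV D"
    and h_deriv: "\<And>y. ((\<lambda>t. h (y + t *\<^sub>R e)) has_real_derivative D y) (at 0)"
    and h_supp: "\<And>x. R \<le> norm x \<Longrightarrow> h x = 0" and D_supp: "\<And>x. R \<le> norm x \<Longrightarrow> D x = 0"
  shows "(D has_integral 0) UNIV"
proof -
  define K where "K = cball (0::'a) (R + norm e)"
  define c :: "nat \<Rightarrow> real" where "c = (\<lambda>n. inverse (Suc n))"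
  have c: "0 < c n" "c n \<le> 1" for n
    by (auto simp: c_def inverse_le_1_iff)
  define q where "q = (\<lambda>n x. (h (x + c n *\<^sub>R e) - h x) / c n)"
  have q_int: "(q n has_integral 0) K" for n
    unfolding q_def K_def using c[of n] by (intro difference_quotient_has_integral_0[OF h_cont h_supp]) auto
  obtain M where M: "\<And>y. \<bar>D y\<bar> \<le> M"
    using bounded_compact_support[OF D_cont D_supp] by blast
  have q_bound: "norm (q n x) \<le> M" for n x
    using abs_difference_quotient_le[OF h_deriv M c(1)] by (simp add: q_def)
  have q_lim: "(\<lambda>n. q n x) \<longlonglongrightarrow> D x" for x
  proof -
    have "((\<lambda>t. (h (x + t *\<^sub>R e) - h x) / t) \<longlongrightarrow> D x) (at 0)"
      using h_deriv[of x] by (simp add: has_field_derivative_iff)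
    moreover have "filterlim c (at 0) sequentially"
      using c LIMSEQ_inverse_real_of_nat by (auto simp: filterlim_at c_def)
    ultimately show ?thesis
      unfolding q_def using filterlim_compose[of "\<lambda>t. (h (x + t *\<^sub>R e) - h x) / t"] by blast
  qed
  have M_int: "(\<lambda>_. M) integrable_on K"
    by (simp add: K_def integrable_on_const lmeasurable_cball)
  have "D integrable_on K" and "(\<lambda>n. integral K (q n)) \<longlonglongrightarrow> integral K D"
    using dominated_convergence[of q K "\<lambda>_. M" D, OF _ M_int q_bound q_lim] q_int by blast+
  moreover have "integral K (q n) = 0" for n
    using q_int by blast
  ultimately have "(D has_integral 0) K"
    using LIMSEQ_unique[OF _ tendsto_const[of 0]] integrable_integral by fastforce
  moreover have "D x = 0" if "x \<notin> K" for x
    using that D_supp[of x] norm_ge_zero[of e] by (simp add: K_def)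
  ultimately show ?thesis
    by (rule has_integral_on_superset) auto
qed

lemma continuous_on_extend_by_0:
  fixes g :: "'a::real_normed_vector \<Rightarrow> 'b::real_normed_vector"
  assumes g: "continuous_on (UNIV - {0}) g"
    and r: "0 < r" and g0: "\<And>x. x \<noteq> 0 \<Longrightarrow> norm x < r \<Longrightarrow> g x = 0"
  shows "continuous_on UNIV (\<lambda>x. if x = 0 then 0 else g x)"
proof -
  have "continuous_on ((UNIV - {0}) \<union> ball 0 r) (\<lambda>x. if x = 0 then 0 else g x)"
  proof (rule continuous_on_open_Un)
    show "continuous_on (UNIV - {0}) (\<lambda>x. if x = 0 then 0 else g x)"
      using g by (rule continuous_on_eq) auto
    show "continuous_on (ball 0 r) (\<lambda>x. if x = 0 then 0 else g x)"
      by (rule continuous_on_eq[OF continuous_on_const[of _ 0]]) (use g0 in auto)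
  qed auto
  moreover have "(UNIV - {0}) \<union> ball 0 r = UNIV"
    using r by auto
  ultimately show ?thesis by metis
qed

lemma has_real_derivative_line_extend_by_0:
  fixes g d :: "'a::real_normed_vector \<Rightarrow> real"
  assumes g: "\<And>y. y \<noteq> 0 \<Longrightarrow> ((\<lambda>t. g (y + t *\<^sub>R e)) has_real_derivative d y) (at 0)"
    and r: "0 < r" and g0: "\<And>x. x \<noteq> 0 \<Longrightarrow> norm x < r \<Longrightarrow> g x = 0"
  shows "((\<lambda>t. if y + t *\<^sub>R e = 0 then 0 else g (y + t *\<^sub>R e))
           has_real_derivative (if y = 0 then 0 else d y)) (at 0)"
proof -
  have near: "\<forall>\<^sub>F t in nhds 0. y + t *\<^sub>R e \<in> B" if "open B" "y \<in> B" for B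
  proof -
    have "open ((\<lambda>t. y + t *\<^sub>R e) -` B)"
      using that by (intro open_vimage continuous_intros)
    then have "\<forall>\<^sub>F t in nhds 0. t \<in> (\<lambda>t. y + t *\<^sub>R e) -` B"
      using that by (intro eventually_nhds_in_open) auto
    then show ?thesis by simp
  qed
  show ?thesis
  proof (cases "y = 0")
    case True
    have "\<forall>\<^sub>F t in nhds 0. y + t *\<^sub>R e \<in> ball 0 r"
      using r True by (intro near) auto
    then have "\<forall>\<^sub>F t in nhds 0. 0 = (if y + t *\<^sub>R e = 0 then 0 else g (y + t *\<^sub>R e))"
      by eventually_elim (use g0 in auto)
    then have "((\<lambda>t. if y + t *\<^sub>R e = 0 then 0 else g (y + t *\<^sub>R e)) has_real_derivative 0) (at 0)"
      by (rule DERIV_cong_ev[OF refl _ refl, THEN iffD1]) (rule DERIV_const)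
    then show ?thesis
      using True by simp
  next
    case False
    have "\<forall>\<^sub>F t in nhds 0. y + t *\<^sub>R e \<in> UNIV - {0}"
      using False by (intro near) auto
    then have "\<forall>\<^sub>F t in nhds 0. g (y + t *\<^sub>R e) = (if y + t *\<^sub>R e = 0 then 0 else g (y + t *\<^sub>R e))"
      by eventually_elim auto
    then have "((\<lambda>t. if y + t *\<^sub>R e = 0 then 0 else g (y + t *\<^sub>R e)) has_real_derivative d y) (at 0)"
      by (rule DERIV_cong_ev[OF refl _ refl, THEN iffD1]) (rule g[OF False])
    then show ?thesis
      using False by simp
  qed
qed

lemma integrable_on_UNIV_punctured_support:
  fixes g :: "'a::euclidean_space \<Rightarrow> real"
  assumes g: "continuous_on (UNIV - {0}) g" and r: "0 < r"
    and supp: "\<And>x. x \<noteq> 0 \<Longrightarrow> norm x < r \<or> R \<le> norm x \<Longrightarrow> g x = 0"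
  shows "g integrable_on UNIV"
proof -
  define G where "G x = (if x = 0 then 0 else g x)" for x
  have "continuous_on UNIV G"
    unfolding G_def by (rule continuous_on_extend_by_0[OF g r]) (use supp in auto)
  then have "G integrable_on UNIV"
    by (rule integrable_on_UNIV_compact_support) (use supp in \<open>auto simp: G_def\<close>)
  then show ?thesis
    by (rule integrable_spike[OF _ negligible_sing[of 0]]) (simp add: G_def)
qed

lemma directional_derivative_has_integral_0_punctured:
  fixes h D :: "'a::euclidean_space \<Rightarrow> real"
  assumes h_cont: "continuous_on (UNIV - {0}) h" and D_cont: "continuous_on (UNIV - {0}) D"
    and h_deriv: "\<And>y. y \<noteq> 0 \<Longrightarrow> ((\<lambda>t. h (y + t *\<^sub>R e)) has_real_derivative D y) (at 0)"
    and r: "0 < r" and supp: "\<And>x. x \<noteq> 0 \<Longrightarrow> norm x < r \<or> R \<le> norm x \<Longrightarrow> h x = 0 \<and> D x = 0"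
  shows "(D has_integral 0) UNIV"
proof -
  define H where "H x = (if x = 0 then 0 else h x)" for x
  define D0 where "D0 x = (if x = 0 then 0 else D x)" for x
  have D0_int: "(D0 has_integral 0) UNIV"
  proof (rule directional_derivative_has_integral_0)
    show "continuous_on UNIV H"
      unfolding H_def by (rule continuous_on_extend_by_0[OF h_cont r]) (use supp in auto)
    show "continuous_on UNIV D0"
      unfolding D0_def by (rule continuous_on_extend_by_0[OF D_cont r]) (use supp in auto)
    show "((\<lambda>t. H (y + t *\<^sub>R e)) has_real_derivative D0 y) (at 0)" for y
      unfolding H_def D0_def by (rule has_real_derivative_line_extend_by_0[OF h_deriv r]) (use supp in auto)
    show "H x = 0" "D0 x = 0" if "R \<le> norm x" for x
      using supp that by (auto simp: H_def D0_def)
  qed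
  show ?thesis
    by (rule has_integral_spike[OF negligible_sing[of 0] _ D0_int]) (simp add: D0_def)
qed

lemma has_integral_UNIV_Diff_singleton:
  fixes f :: "'a::euclidean_space \<Rightarrow> 'b::banach"
  shows "(f has_integral i) (UNIV - {a}) \<longleftrightarrow> (f has_integral i) UNIV"
  by (rule has_integral_spike_set_eq) (auto intro: negligible_subset[OF negligible_sing[of a]])

section \<open>The truncated energy estimate\<close>

lemma has_real_derivative_partial_deriv:
  assumes "has_partials_on S f" "y \<in> S"
  shows "((\<lambda>t. f (y + t *\<^sub>R axis i 1)) has_real_derivative partial_deriv i f y) (at 0)"
  using assms unfolding has_partials_on_def partial_deriv_def
  by (simp add: DERIV_deriv_iff_real_differentiable)

lemma C2_on_continuous:
  assumes "C2_on S u"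
  shows "continuous_on S u" and "continuous_on S (partial_deriv i u)"
    and "continuous_on S (partial_deriv j (partial_deriv i u))"
  using assms by (simp_all add: C2_on_def)

lemma C2_on_has_real_derivative:
  assumes "C2_on S u" "y \<in> S"
  shows "((\<lambda>t. u (y + t *\<^sub>R axis i 1)) has_real_derivative partial_deriv i u y) (at 0)"
    and "((\<lambda>t. partial_deriv i u (y + t *\<^sub>R axis i 1))
           has_real_derivative partial_deriv i (partial_deriv i u) y) (at 0)"
  using assms unfolding C2_on_def by (auto intro: has_real_derivative_partial_deriv)

lemma continuous_on_laplacian:
  "C2_on S u \<Longrightarrow> continuous_on S (laplacian u)"
  unfolding laplacian_def by (intro continuous_intros C2_on_continuous)

lemma filterlim_at_top_at_0E:
  fixes u :: "'a::real_normed_vector \<Rightarrow> real"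
  assumes "filterlim u at_top (at 0)"
  obtains \<delta> where "0 < \<delta>" "\<And>x. x \<noteq> 0 \<Longrightarrow> norm x < \<delta> \<Longrightarrow> b \<le> u x"
proof -
  have "\<forall>\<^sub>F x in at 0. b \<le> u x"
    using assms by (simp add: filterlim_at_top)
  then show ?thesis
    using that by (auto simp: eventually_at dist_norm)
qed

lemma integrable_cutoff_laplacian:
  fixes u :: "real^'n \<Rightarrow> real"
  assumes C2: "C2_on (UNIV - {0}) u" and blowup: "filterlim u at_top (at 0)" and r: "0 < r" "r < \<rho>"
  shows "(\<lambda>x. bump r \<rho> x * cutoff k (k + 1) (u x) * - laplacian u x) integrable_on UNIV"
proof -
  obtain \<delta> where \<delta>: "0 < \<delta>" "\<And>x. x \<noteq> 0 \<Longrightarrow> norm x < \<delta> \<Longrightarrow> k + 1 \<le> u x"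
    using filterlim_at_top_at_0E[OF blowup] by blast
  show ?thesis
  proof (rule integrable_on_UNIV_punctured_support[OF _ \<delta>(1)])
    show "continuous_on (UNIV - {0}) (\<lambda>x. bump r \<rho> x * cutoff k (k + 1) (u x) * - laplacian u x)"
      by (intro continuous_intros continuous_on_bump C2_on_continuous[OF C2] continuous_on_laplacian[OF C2])
    show "bump r \<rho> x * cutoff k (k + 1) (u x) * - laplacian u x = 0"
      if "x \<noteq> 0" "norm x < \<delta> \<or> \<rho> \<le> norm x" for x
      using that \<delta>(2)[of x] r bump_eq_0[of r \<rho> x] cutoff_eq_0[of k "k + 1" "u x"] by auto
  qed
qed

lemma integrable_bump_gradient:
  fixes u :: "real^'n \<Rightarrow> real"
  assumes C2: "C2_on (UNIV - {0}) u" and r: "0 < r" "r < \<rho>"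
  shows "(\<lambda>x. \<Sum>i\<in>UNIV. \<bar>partial_deriv i (bump r \<rho>) x * partial_deriv i u x\<bar>) integrable_on UNIV"
proof (rule integrable_on_UNIV_punctured_support[OF _ r(1)])
  show "continuous_on (UNIV - {0}) (\<lambda>x. \<Sum>i\<in>UNIV. \<bar>partial_deriv i (bump r \<rho>) x * partial_deriv i u x\<bar>)"
    by (intro continuous_intros continuous_on_partial_deriv_bump C2_on_continuous[OF C2])
  show "(\<Sum>i\<in>UNIV. \<bar>partial_deriv i (bump r \<rho>) x * partial_deriv i u x\<bar>) = 0"
    if "x \<noteq> 0" "norm x < r \<or> \<rho> \<le> norm x" for x
    using that r by (auto simp: partial_deriv_bump_eq_0)
qed

text \<open>With a i = \<partial>_i\<psi> \<partial>_iu, b i = \<partial>_iu and c i = \<partial>_i\<partial>_iu, the subtracted sum is the divergence of \<psi> G(u) \<nabla>u.\<close>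

lemma cutoff_energy_pointwise_le:
  fixes a b c :: "'i \<Rightarrow> real"
  assumes "0 \<le> \<psi>" "0 \<le> G" "G \<le> 1" "G' \<le> 0"
  shows "\<psi> * G * - (\<Sum>i\<in>I. c i) \<le> (\<Sum>i\<in>I. \<bar>a i\<bar>) - (\<Sum>i\<in>I. a i * G + \<psi> * G' * (b i)\<^sup>2 + \<psi> * G * c i)"
proof -
  have "(\<Sum>i\<in>I. a i) * G \<le> \<bar>\<Sum>i\<in>I. a i\<bar> * G"
    using assms by (simp add: mult_right_mono)
  also have "\<dots> \<le> \<bar>\<Sum>i\<in>I. a i\<bar>"
    using assms by (simp add: mult_left_le_one_le mult.commute)
  also have "\<dots> \<le> (\<Sum>i\<in>I. \<bar>a i\<bar>)"
    by (rule sum_abs)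
  finally have "(\<Sum>i\<in>I. a i) * G \<le> (\<Sum>i\<in>I. \<bar>a i\<bar>)" .
  moreover have "\<psi> * G' * (\<Sum>i\<in>I. (b i)\<^sup>2) \<le> 0"
    using assms by (simp add: mult_nonneg_nonpos sum_nonneg mult_nonpos_nonneg)
  ultimately show ?thesis
    by (simp add: sum.distrib sum_distrib_left sum_distrib_right algebra_simps)
qed

lemma has_integral_cutoff_flux_derivative_0:
  fixes u :: "real^'n \<Rightarrow> real" and k :: real
  assumes C2: "C2_on (UNIV - {0}) u" and blowup: "filterlim u at_top (at 0)" and r: "0 < r" "r < \<rho>"
  defines "\<psi> \<equiv> bump r \<rho>" and "G \<equiv> cutoff k (k + 1)"
  shows "((\<lambda>x. partial_deriv i \<psi> x * partial_deriv i u x * G (u x)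
             + \<psi> x * cutoff' k (k + 1) (u x) * (partial_deriv i u x)\<^sup>2
             + \<psi> x * G (u x) * partial_deriv i (partial_deriv i u) x) has_integral 0) UNIV"
    (is "(?dF has_integral 0) UNIV")
  \<comment> \<open>?dF is the i-th partial derivative of \<psi> G(u) \<partial>_iu, which vanishes near 0 because u blows up there\<close>
proof -
  obtain \<delta> where \<delta>: "0 < \<delta>" "\<And>x. x \<noteq> 0 \<Longrightarrow> norm x < \<delta> \<Longrightarrow> k + 1 \<le> u x"
    using filterlim_at_top_at_0E[OF blowup] by blast
  note u_cont = C2_on_continuous[OF C2] and u_deriv = C2_on_has_real_derivative[OF C2]
  show ?thesis
  proof (rule directional_derivative_has_integral_0_punctured[OF _ _ _ \<delta>(1)])
    show "continuous_on (UNIV - {0}) (\<lambda>x. \<psi> x * G (u x) * partial_deriv i u x)"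
      unfolding \<psi>_def G_def by (intro continuous_intros continuous_on_bump u_cont)
    show "continuous_on (UNIV - {0}) ?dF"
      unfolding \<psi>_def G_def
      by (intro continuous_intros continuous_on_bump continuous_on_partial_deriv_bump u_cont)
    show "((\<lambda>t. \<psi> (y + t *\<^sub>R axis i 1) * G (u (y + t *\<^sub>R axis i 1)) * partial_deriv i u (y + t *\<^sub>R axis i 1))
        has_real_derivative ?dF y) (at 0)" if "y \<noteq> 0" for y
    proof -
      have "((\<lambda>t. G (u (y + t *\<^sub>R axis i 1))) has_real_derivative cutoff' k (k + 1) (u y) * partial_deriv i u y) (at 0)"
        using DERIV_chain2[OF cutoff_has_real_derivative u_deriv(1)] that by (simp add: G_def)
      from DERIV_mult[OF DERIV_mult[OF bump_has_real_derivative_axis this] u_deriv(2)] that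
      show ?thesis
        by (simp add: \<psi>_def algebra_simps power2_eq_square)
    qed
    show "\<psi> x * G (u x) * partial_deriv i u x = 0 \<and> ?dF x = 0"
      if "x \<noteq> 0" "norm x < \<delta> \<or> \<rho> \<le> norm x" for x
      using that \<delta>(2)[of x] r bump_eq_0[of r \<rho> x] partial_deriv_bump_eq_0[of r \<rho> x i]
        cutoff_eq_0[of k "k + 1" "u x"] cutoff'_eq_0[of k "k + 1" "u x"]
      by (auto simp: \<psi>_def G_def)
  qed
qed

lemma integral_cutoff_laplacian_le:
  fixes u :: "real^'n \<Rightarrow> real"
  assumes C2: "C2_on (UNIV - {0}) u" and blowup: "filterlim u at_top (at 0)" and r: "0 < r" "r < \<rho>"
  shows "integral UNIV (\<lambda>x. bump r \<rho> x * cutoff k (k + 1) (u x) * - laplacian u x)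
           \<le> integral UNIV (\<lambda>x. \<Sum>i\<in>UNIV. \<bar>partial_deriv i (bump r \<rho>) x * partial_deriv i u x\<bar>)"
proof -
  define \<psi> :: "real^'n \<Rightarrow> real" where "\<psi> = bump r \<rho>"
  define G where "G = cutoff k (k + 1)"
  define dF where "dF = (\<lambda>i x. partial_deriv i \<psi> x * partial_deriv i u x * G (u x)
      + \<psi> x * cutoff' k (k + 1) (u x) * (partial_deriv i u x)\<^sup>2
      + \<psi> x * G (u x) * partial_deriv i (partial_deriv i u) x)"
  have "(dF i has_integral 0) UNIV" for i
    unfolding dF_def \<psi>_def G_def
    by (rule has_integral_cutoff_flux_derivative_0[OF C2 blowup r])
  then have "((\<lambda>x. \<Sum>i\<in>UNIV. dF i x) has_integral 0) UNIV"
    using has_integral_sum[of UNIV dF "\<lambda>_. 0" UNIV] by simp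
  then have "((\<lambda>x. (\<Sum>i\<in>UNIV. \<bar>partial_deriv i \<psi> x * partial_deriv i u x\<bar>) - (\<Sum>i\<in>UNIV. dF i x))
      has_integral integral UNIV (\<lambda>x. \<Sum>i\<in>UNIV. \<bar>partial_deriv i \<psi> x * partial_deriv i u x\<bar>) - 0) UNIV"
    unfolding \<psi>_def by (rule has_integral_diff[OF integrable_integral[OF integrable_bump_gradient[OF C2 r]]])
  moreover have "\<psi> x * G (u x) * - laplacian u x
      \<le> (\<Sum>i\<in>UNIV. \<bar>partial_deriv i \<psi> x * partial_deriv i u x\<bar>) - (\<Sum>i\<in>UNIV. dF i x)" for x
    unfolding laplacian_def dF_def
    by (rule cutoff_energy_pointwise_le) (simp_all add: \<psi>_def G_def bump_nonneg cutoff_nonneg cutoff_le_1 cutoff'_nonpos)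
  ultimately show ?thesis
    using has_integral_le[OF integrable_integral[OF integrable_cutoff_laplacian[OF C2 blowup r]]]
    by (simp add: \<psi>_def G_def)
qed

lemma laplacian_absolutely_integrable_near_singularity:
  fixes u :: "real^'n \<Rightarrow> real"
  assumes C2: "C2_on (UNIV - {0}) u" and blowup: "filterlim u at_top (at 0)"
    and superharmonic: "\<And>x. x \<noteq> 0 \<Longrightarrow> norm x < \<rho> \<Longrightarrow> 0 \<le> - laplacian u x"
    and r: "0 < r" "r < \<rho>"
  shows "(\<lambda>x. - laplacian u x) absolutely_integrable_on cball 0 r"
proof -
  define \<psi> :: "real^'n \<Rightarrow> real" where "\<psi> = bump r \<rho>"
  define g where "g = (\<lambda>(k::nat) x. \<psi> x * cutoff (real k) (real k + 1) (u x) * - laplacian u x)"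
  define B where "B = integral UNIV (\<lambda>x. \<Sum>i\<in>UNIV. \<bar>partial_deriv i \<psi> x * partial_deriv i u x\<bar>)"
  have g_int: "g k integrable_on UNIV - {0}" and g_le: "integral (UNIV - {0}) (g k) \<le> B" for k
  proof -
    have "g k integrable_on UNIV"
      unfolding g_def \<psi>_def by (rule integrable_cutoff_laplacian[OF C2 blowup r])
    then have "(g k has_integral integral UNIV (g k)) (UNIV - {0})"
      by (simp add: has_integral_UNIV_Diff_singleton integrable_integral)
    moreover have "integral UNIV (g k) \<le> B"
      unfolding g_def \<psi>_def B_def by (rule integral_cutoff_laplacian_le[OF C2 blowup r])
    ultimately show "g k integrable_on UNIV - {0}" "integral (UNIV - {0}) (g k) \<le> B"
      by (auto simp: integral_unique)
  qed
  have g_nonneg: "0 \<le> g k x" and g_mono: "g k x \<le> g (Suc k) x" if "x \<in> UNIV - {0}" for k x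
    using bump_cutoff_mult_nonneg_mono[OF r, of x "- laplacian u x" "real k" "real (Suc k)"] superharmonic that
    by (auto simp: g_def \<psi>_def)
  have g_lim: "(\<lambda>k. g k x) \<longlonglongrightarrow> \<psi> x * - laplacian u x" for x
  proof (rule tendsto_eventually)
    obtain N :: nat where "u x \<le> real N"
      using real_arch_simple by blast
    then have "\<forall>k\<ge>N. cutoff (real k) (real k + 1) (u x) = 1"
      by (auto intro: cutoff_eq_1)
    then show "\<forall>\<^sub>F k in sequentially. g k x = \<psi> x * - laplacian u x"
      unfolding eventually_sequentially g_def by auto
  qed
  have "(\<lambda>x. \<psi> x * - laplacian u x) integrable_on UNIV - {0}"
  proof (rule monotone_convergence_increasing[OF g_int g_mono g_lim, THEN conjunct1])
    have "0 \<le> integral (UNIV - {0}) (g k)" for k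
      by (rule integral_nonneg[OF g_int]) (use g_nonneg in blast)
    then show "bounded (range (\<lambda>k. integral (UNIV - {0}) (g k)))"
      using g_le by (auto simp: bounded_iff intro!: exI[of _ B])
  qed
  moreover have "0 \<le> \<psi> x * - laplacian u x" if "x \<in> UNIV - {0}" for x
    using LIMSEQ_le_const[OF g_lim] g_nonneg[OF that] by blast
  ultimately have "(\<lambda>x. \<psi> x * - laplacian u x) absolutely_integrable_on UNIV - {0}"
    by (rule nonnegative_absolutely_integrable_1)
  then have "(\<lambda>x. \<psi> x * - laplacian u x) absolutely_integrable_on cball 0 r - {0}"
    by (rule set_integrable_subset) auto
  then have "(\<lambda>x. - laplacian u x) absolutely_integrable_on cball 0 r - {0}"
    by (rule absolutely_integrable_spike[OF _ negligible_empty]) (use r in \<open>simp add: \<psi>_def bump_eq_1\<close>)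
  then show ?thesis
    by (rule absolutely_integrable_spike_set_eq[THEN iffD1, rotated -1])
      (auto intro: negligible_subset[OF negligible_sing[of 0]])
qed

section \<open>Local integrability\<close>

lemma absolutely_integrable_dominated_off_point:
  fixes f g :: "'a::euclidean_space \<Rightarrow> real"
  assumes g: "continuous_on (S - {a}) g" and S: "S \<in> sets lebesgue"
    and f: "f integrable_on S" and le: "\<And>x. x \<in> S - {a} \<Longrightarrow> \<bar>g x\<bar> \<le> f x"
  shows "g absolutely_integrable_on S"
proof -
  have S': "S - {a} \<in> sets lebesgue"
    using S negligible_imp_sets[OF negligible_sing] by blast
  have "f integrable_on S - {a}"
    by (rule integrable_spike_set[OF f]) (auto intro: negligible_subset[OF negligible_sing[of a]])
  with g S' le have "g absolutely_integrable_on S - {a}"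
    by (intro measurable_bounded_by_integrable_imp_absolutely_integrable continuous_imp_measurable_on_sets_lebesgue)
      auto
  then show ?thesis
    by (rule absolutely_integrable_spike_set_eq[THEN iffD1, rotated -1])
      (auto intro: negligible_subset[OF negligible_sing[of a]])
qed

lemma locally_L1_if_dominated_near_0:
  fixes f g :: "real^'n \<Rightarrow> real"
  assumes g_cont: "continuous_on (UNIV - {0}) g" and r: "0 < r"
    and f: "f integrable_on cball 0 r" and le: "\<And>x. x \<noteq> 0 \<Longrightarrow> norm x \<le> r \<Longrightarrow> \<bar>g x\<bar> \<le> f x"
  shows "locally_L1 g"
  unfolding locally_L1_def
proof (intro allI impI)
  fix K :: "(real^'n) set"
  assume K: "compact K"
  obtain b where "\<forall>x\<in>K. norm x \<le> b"
    using compact_imp_bounded[OF K] unfolding bounded_iff by blast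
  then have b: "K \<subseteq> cball 0 r \<union> (cball 0 b - ball 0 r)"
    by auto
  have "g absolutely_integrable_on cball 0 r"
    by (rule absolutely_integrable_dominated_off_point[OF _ _ f])
      (auto intro: continuous_on_subset[OF g_cont] le)
  moreover have "g absolutely_integrable_on cball 0 b - ball 0 r"
    by (rule absolutely_integrable_continuous_compact)
      (auto intro: compact_diff continuous_on_subset[OF g_cont] simp: r)
  ultimately have "g absolutely_integrable_on cball 0 r \<union> (cball 0 b - ball 0 r)"
    by (rule absolutely_integrable_Un)
  then show "g absolutely_integrable_on K"
    using set_integrable_subset[OF _ fmeasurableD[OF lmeasurable_compact[OF K]] b] by blast
qed

theorem lemma3p1:
  fixes Q u :: "real^'n \<Rightarrow> real" and p :: real
  assumes "CARD('n) \<ge> 2"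
    and "p > 1"
    and "\<forall>x. Q x \<ge> 0"
    and "hoelder_continuous Q"
    and "Q 0 > 0"
    and "C2_on (UNIV - {0}) u"
    and "\<forall>x. x \<noteq> 0 \<longrightarrow> - laplacian u x - u x = Q x * \<bar>u x\<bar> powr (p - 1) * u x"
    and "filterlim u at_top (at 0)"
  shows "locally_L1 u \<and> locally_L1 (\<lambda>x. Q x * \<bar>u x\<bar> powr (p - 1) * u x)"
proof -
  define V where "V = (\<lambda>x. Q x * \<bar>u x\<bar> powr (p - 1) * u x)"
  obtain \<rho> where \<rho>: "0 < \<rho>" "\<And>x. x \<noteq> 0 \<Longrightarrow> norm x < \<rho> \<Longrightarrow> 1 \<le> u x"
    using filterlim_at_top_at_0E[OF assms(8)] by blast
  have lap: "- laplacian u x = u x + V x" if "x \<noteq> 0" for x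
    using assms(7) that by (simp add: V_def algebra_simps)
  have dominated: "\<bar>u x\<bar> \<le> - laplacian u x" "\<bar>V x\<bar> \<le> - laplacian u x"
    if "x \<noteq> 0" "norm x < \<rho>" for x
    using \<rho>(2)[OF that] assms(3) lap[OF that(1)] by (simp_all add: V_def)
  have "(\<lambda>x. - laplacian u x) absolutely_integrable_on cball 0 (\<rho> / 2)"
    by (rule laplacian_absolutely_integrable_near_singularity[OF assms(6,8)])
      (use \<rho> dominated in force)+
  then have lap_int: "(\<lambda>x. - laplacian u x) integrable_on cball 0 (\<rho> / 2)"
    using set_lebesgue_integral_eq_integral(1) by blast
  have u_cont: "continuous_on (UNIV - {0}) u"
    using C2_on_continuous(1)[OF assms(6)] .
  have V_cont: "continuous_on (UNIV - {0}) V"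
    by (rule continuous_on_eq[of _ "\<lambda>x. - laplacian u x - u x"])
      (auto intro!: continuous_intros u_cont continuous_on_laplacian[OF assms(6)] simp: lap)
  have "locally_L1 u" "locally_L1 V"
    by (rule locally_L1_if_dominated_near_0[OF _ _ lap_int]; use u_cont V_cont \<rho> dominated in force)+
  then show ?thesis
    by (simp add: V_def)
qed

end
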